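(* Let $\mathcal{A}\subseteq\mathcal{B}$ be sub-$\sigma$-algebras of a complete probability space $(\Omega,\mathcal{F},P)$. Let $x:L_\infty(\mathcal{B})\to L_\infty(\mathcal{A})$ be an $\mathcal{A}$-homogeneous monotone linear operator with $x(1)=1$. The following are equivalent: (1) $x$ is continuous from below; (2) $x$ is continuous from above; (3) $x$ is weak$^*$ continuous, i.e. continuous when both $L_\infty(\mathcal{B})$ and $L_\infty(\mathcal{A})$ carry the weak$^*$ topology.
   Context: $\mathcal{A}$-homogeneous: $x(\lambda X)=\lambda x(X)$ for $\lambda\in L^+_\infty(\mathcal{A})$. Continuous from above (resp. below): for every nonincreasing (resp. nondecreasing) sequence $X_n$ with $P$-a.s. limit $X$, $x(X_n)\to x(X)$ $P$-a.s. monotonically. The weak$^*$ topology on $L_\infty(\mathcal{B})$ is $\sigma(L_\infty(\mathcal{B}),L_1(\mathcal{B}))$, the coarsest topology making $X\mapsto E[fX]$ continuous for every $f\in L_1(\mathcal{B})$; similarly for $L_\infty(\mathcal{A})$. *)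

theory Defs
  imports "HOL-Probability.Probability"
begin

text \<open>Elements of L_infinity are
  identified up to M-almost sure equality; all statements below are made modulo M-null sets.\<close>
definition Linf :: "'a measure \<Rightarrow> 'a measure \<Rightarrow> ('a \<Rightarrow> real) set" where
  "Linf M N = {X. X \<in> borel_measurable N \<and> (\<exists>C. AE \<omega> in M. \<bar>X \<omega>\<bar> \<le> C)}"

definition Linf_pos :: "'a measure \<Rightarrow> 'a measure \<Rightarrow> ('a \<Rightarrow> real) set" where
  "Linf_pos M N = {X \<in> Linf M N. AE \<omega> in M. 0 \<le> X \<omega>}"

definition L1 :: "'a measure \<Rightarrow> 'a measure \<Rightarrow> ('a \<Rightarrow> real) set" where
  "L1 M N = {f. f \<in> borel_measurable N \<and> integrable M f}"

definition weak_star :: "'a measure \<Rightarrow> 'a measure \<Rightarrow> ('a \<Rightarrow> real) topology" where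
  "weak_star M N = topology_generated_by
     {{X \<in> Linf M N. (\<integral>\<omega>. f \<omega> * X \<omega> \<partial>M) \<in> U} | f U. f \<in> L1 M N \<and> open U}"

definition admissible_op ::
  "'a measure \<Rightarrow> 'a measure \<Rightarrow> 'a measure \<Rightarrow> (('a \<Rightarrow> real) \<Rightarrow> ('a \<Rightarrow> real)) \<Rightarrow> bool" where
  "admissible_op M A B x \<longleftrightarrow>
     (\<forall>X \<in> Linf M B. x X \<in> Linf M A)
   \<and> (\<forall>X \<in> Linf M B. \<forall>Y \<in> Linf M B. (AE \<omega> in M. X \<omega> = Y \<omega>) \<longrightarrow> (AE \<omega> in M. x X \<omega> = x Y \<omega>))
   \<and> (\<forall>X \<in> Linf M B. \<forall>Y \<in> Linf M B. \<forall>a b::real.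
        AE \<omega> in M. x (\<lambda>\<omega>. a * X \<omega> + b * Y \<omega>) \<omega> = a * x X \<omega> + b * x Y \<omega>)
   \<and> (\<forall>X \<in> Linf M B. \<forall>Y \<in> Linf M B. (AE \<omega> in M. X \<omega> \<le> Y \<omega>) \<longrightarrow> (AE \<omega> in M. x X \<omega> \<le> x Y \<omega>))
   \<and> (\<forall>l \<in> Linf_pos M A. \<forall>X \<in> Linf M B. AE \<omega> in M. x (\<lambda>\<omega>. l \<omega> * X \<omega>) \<omega> = l \<omega> * x X \<omega>)
   \<and> (AE \<omega> in M. x (\<lambda>_. 1) \<omega> = 1)"

definition cont_from_below ::
  "'a measure \<Rightarrow> 'a measure \<Rightarrow> (('a \<Rightarrow> real) \<Rightarrow> ('a \<Rightarrow> real)) \<Rightarrow> bool" where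
  "cont_from_below M B x \<longleftrightarrow>
     (\<forall>Xs X. (\<forall>n. Xs n \<in> Linf M B) \<and> X \<in> Linf M B
        \<and> (AE \<omega> in M. incseq (\<lambda>n. Xs n \<omega>)) \<and> (AE \<omega> in M. (\<lambda>n. Xs n \<omega>) \<longlonglongrightarrow> X \<omega>)
      \<longrightarrow> (AE \<omega> in M. incseq (\<lambda>n. x (Xs n) \<omega>) \<and> (\<lambda>n. x (Xs n) \<omega>) \<longlonglongrightarrow> x X \<omega>))"

definition cont_from_above ::
  "'a measure \<Rightarrow> 'a measure \<Rightarrow> (('a \<Rightarrow> real) \<Rightarrow> ('a \<Rightarrow> real)) \<Rightarrow> bool" where
  "cont_from_above M B x \<longleftrightarrow>
     (\<forall>Xs X. (\<forall>n. Xs n \<in> Linf M B) \<and> X \<in> Linf M B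
        \<and> (AE \<omega> in M. decseq (\<lambda>n. Xs n \<omega>)) \<and> (AE \<omega> in M. (\<lambda>n. Xs n \<omega>) \<longlonglongrightarrow> X \<omega>)
      \<longrightarrow> (AE \<omega> in M. decseq (\<lambda>n. x (Xs n) \<omega>) \<and> (\<lambda>n. x (Xs n) \<omega>) \<longlonglongrightarrow> x X \<omega>))"

end

theory Submission
  imports Defs
begin

text \<open>Continuity from below and from above are exchanged by X \<mapsto> -X.
  If x is weak* continuous and X_n decreases to X, then X_n \<rightarrow> X weak* by dominated convergence,
  so E[x(X_n)] \<rightarrow> E[x(X)]; as x(X_n) - x(X) \<ge> 0 decreases, this forces almost sure convergence.
  Conversely, if x is continuous from below and f \<in> L_1(A) is nonnegative, then
  S \<mapsto> E[f x(1_S)] is a measure on B absolutely continuous with respect to P; its Radon--Nikodym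
  density g satisfies E[f x(X)] = E[g X] for all X. Hence x is the adjoint of a map
  L_1(A) \<rightarrow> L_1(B) and therefore weak* continuous.\<close>

lemma LinfI: "X \<in> borel_measurable N \<Longrightarrow> (AE \<omega> in M. \<bar>X \<omega>\<bar> \<le> C) \<Longrightarrow> X \<in> Linf M N"
  by (auto simp: Linf_def)

lemma Linf_measurable: "X \<in> Linf M N \<Longrightarrow> X \<in> borel_measurable N"
  by (simp add: Linf_def)

lemma Linf_measurable_subalgebra: "subalgebra M N \<Longrightarrow> X \<in> Linf M N \<Longrightarrow> X \<in> borel_measurable M"
  by (meson Linf_measurable measurable_from_subalg)

lemma Linf_const: "(\<lambda>_. c) \<in> Linf M N"
  by (rule LinfI[where C="\<bar>c\<bar>"]) auto

lemma Linf_indicator: "S \<in> sets N \<Longrightarrow> indicator S \<in> Linf M N"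
  by (rule LinfI[where C=1]) auto

lemma Linf_AE_abs_le:
  assumes "u \<in> borel_measurable N" "v \<in> Linf M N" "AE \<omega> in M. \<bar>u \<omega>\<bar> \<le> \<bar>v \<omega>\<bar>"
  shows "u \<in> Linf M N"
proof -
  obtain C where "AE \<omega> in M. \<bar>v \<omega>\<bar> \<le> C" using assms(2) by (auto simp: Linf_def)
  with assms(3) have "AE \<omega> in M. \<bar>u \<omega>\<bar> \<le> C" by eventually_elim simp
  with assms(1) show ?thesis by (rule LinfI)
qed

lemma Linf_linear:
  assumes "X \<in> Linf M N" "Y \<in> Linf M N"
  shows "(\<lambda>\<omega>. a * X \<omega> + b * Y \<omega>) \<in> Linf M N"
proof -
  obtain C D where "AE \<omega> in M. \<bar>X \<omega>\<bar> \<le> C" "AE \<omega> in M. \<bar>Y \<omega>\<bar> \<le> D"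
    using assms by (auto simp: Linf_def)
  then have "AE \<omega> in M. \<bar>a * X \<omega> + b * Y \<omega>\<bar> \<le> \<bar>a\<bar> * C + \<bar>b\<bar> * D"
  proof eventually_elim
    case (elim \<omega>)
    have "\<bar>a * X \<omega> + b * Y \<omega>\<bar> \<le> \<bar>a\<bar> * \<bar>X \<omega>\<bar> + \<bar>b\<bar> * \<bar>Y \<omega>\<bar>"
      by (metis abs_mult abs_triangle_ineq)
    also have "\<dots> \<le> \<bar>a\<bar> * C + \<bar>b\<bar> * D"
      using elim by (intro add_mono mult_left_mono) auto
    finally show ?case .
  qed
  moreover have "(\<lambda>\<omega>. a * X \<omega> + b * Y \<omega>) \<in> borel_measurable N"
    using assms by (auto simp: Linf_def)
  ultimately show ?thesis by (intro LinfI)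
qed

lemma Linf_sum:
  "finite I \<Longrightarrow> (\<And>i. i \<in> I \<Longrightarrow> X i \<in> Linf M N) \<Longrightarrow> (\<lambda>\<omega>. \<Sum>i\<in>I. X i \<omega>) \<in> Linf M N"
  by (induction I rule: finite_induct) (auto simp: Linf_const intro: Linf_linear[where a=1 and b=1, simplified])

lemma Linf_uniform_bound_between:
  assumes "Y \<in> Linf M N" "Z \<in> Linf M N" "AE \<omega> in M. \<forall>n. Y \<omega> \<le> Xs n \<omega> \<and> Xs n \<omega> \<le> Z \<omega>"
  shows "\<exists>C. AE \<omega> in M. \<forall>n. \<bar>Xs n \<omega>\<bar> \<le> C"
proof -
  obtain C D where "AE \<omega> in M. \<bar>Y \<omega>\<bar> \<le> C" "AE \<omega> in M. \<bar>Z \<omega>\<bar> \<le> D"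
    using assms by (auto simp: Linf_def)
  with assms(3) have "AE \<omega> in M. \<forall>n. \<bar>Xs n \<omega>\<bar> \<le> C + D"
  proof eventually_elim
    case (elim \<omega>)
    then have "- (C + D) \<le> Xs n \<omega> \<and> Xs n \<omega> \<le> C + D" for n
      by (smt (verit) abs_ge_zero)
    then show ?case by (simp add: abs_le_iff minus_le_iff)
  qed
  then show ?thesis ..
qed

lemma integrable_mult_Linf:
  assumes "integrable M f" "subalgebra M N" "X \<in> Linf M N"
  shows "integrable M (\<lambda>\<omega>. f \<omega> * X \<omega>)"
proof -
  obtain C where C: "AE \<omega> in M. \<bar>X \<omega>\<bar> \<le> C" using assms(3) by (auto simp: Linf_def)
  show ?thesis
  proof (rule Bochner_Integration.integrable_bound[where f="\<lambda>\<omega>. C * f \<omega>"])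
    show "integrable M (\<lambda>\<omega>. C * f \<omega>)" using assms by auto
    show "(\<lambda>\<omega>. f \<omega> * X \<omega>) \<in> borel_measurable M"
      using assms Linf_measurable_subalgebra borel_measurable_integrable by (metis borel_measurable_times)
    show "AE \<omega> in M. norm (f \<omega> * X \<omega>) \<le> norm (C * f \<omega>)"
      using C by eventually_elim (auto simp: abs_mult mult.commute intro: mult_right_mono)
  qed
qed

lemma integrable_Linf: "finite_measure M \<Longrightarrow> subalgebra M N \<Longrightarrow> X \<in> Linf M N \<Longrightarrow> integrable M X"
  using integrable_mult_Linf[of M "\<lambda>_. 1"] finite_measure.integrable_const by fastforce

lemma tendsto_integral_mult_bounded:
  fixes Xs :: "nat \<Rightarrow> 'a \<Rightarrow> real"
  assumes "integrable M f" "\<And>n. Xs n \<in> borel_measurable M" "X \<in> borel_measurable M"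
    and "AE \<omega> in M. \<forall>n. \<bar>Xs n \<omega>\<bar> \<le> C" "AE \<omega> in M. (\<lambda>n. Xs n \<omega>) \<longlonglongrightarrow> X \<omega>"
  shows "(\<lambda>n. \<integral>\<omega>. f \<omega> * Xs n \<omega> \<partial>M) \<longlonglongrightarrow> (\<integral>\<omega>. f \<omega> * X \<omega> \<partial>M)"
proof (rule integral_dominated_convergence[where w="\<lambda>\<omega>. \<bar>f \<omega>\<bar> * C"])
  show "AE \<omega> in M. (\<lambda>n. f \<omega> * Xs n \<omega>) \<longlonglongrightarrow> f \<omega> * X \<omega>"
    using assms(5) by eventually_elim (rule tendsto_mult[OF tendsto_const])
  show "AE \<omega> in M. norm (f \<omega> * Xs n \<omega>) \<le> \<bar>f \<omega>\<bar> * C" for n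
    using assms(4) by eventually_elim (simp add: abs_mult mult_left_mono)
qed (use assms in auto)

lemma AE_tendsto_if_decseq_integral_tendsto:
  fixes Y :: "nat \<Rightarrow> 'a \<Rightarrow> real"
  assumes int: "\<And>n. integrable M (Y n)" "integrable M Z"
    and dec: "AE \<omega> in M. decseq (\<lambda>n. Y n \<omega>)" and ge: "AE \<omega> in M. \<forall>n. Z \<omega> \<le> Y n \<omega>"
    and lim: "(\<lambda>n. \<integral>\<omega>. Y n \<omega> \<partial>M) \<longlonglongrightarrow> (\<integral>\<omega>. Z \<omega> \<partial>M)"
  shows "AE \<omega> in M. (\<lambda>n. Y n \<omega>) \<longlonglongrightarrow> Z \<omega>"
proof -
  define E where "E n \<omega> = ennreal (Y n \<omega> - Z \<omega>)" for n \<omega>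
  have integral_E: "(\<integral>\<^sup>+\<omega>. E n \<omega> \<partial>M) = ennreal ((\<integral>\<omega>. Y n \<omega> \<partial>M) - (\<integral>\<omega>. Z \<omega> \<partial>M))" for n
  proof -
    have "(\<integral>\<^sup>+\<omega>. E n \<omega> \<partial>M) = ennreal (\<integral>\<omega>. Y n \<omega> - Z \<omega> \<partial>M)"
      unfolding E_def using int ge by (intro nn_integral_eq_integral) (auto elim!: eventually_mono)
    then show ?thesis using int by simp
  qed
  then have "(\<integral>\<^sup>+\<omega>. (INF n. E n \<omega>) \<partial>M) \<le> 0"
    using tendsto_ennrealI[OF LIM_zero[OF lim]]
    by (intro LIMSEQ_le_const) (auto intro!: exI[of _ 0] nn_integral_mono INF_lower simp flip: integral_E)
  moreover have "(\<lambda>\<omega>. INF n. E n \<omega>) \<in> borel_measurable M"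
    unfolding E_def using int by measurable
  ultimately have "AE \<omega> in M. (INF n. E n \<omega>) = 0"
    by (simp add: nn_integral_0_iff_AE)
  with dec ge show ?thesis
  proof eventually_elim
    case (elim \<omega>)
    obtain L where L: "(\<lambda>n. Y n \<omega>) \<longlonglongrightarrow> L" "\<forall>n. L \<le> Y n \<omega>"
      using elim decseq_convergent[of "\<lambda>n. Y n \<omega>" "Z \<omega>"] by blast
    have "Z \<omega> \<le> L" using elim by (intro LIMSEQ_le_const[OF L(1)]) auto
    moreover have "ennreal (L - Z \<omega>) \<le> (INF n. E n \<omega>)"
      unfolding E_def using L by (intro INF_greatest ennreal_leI) auto
    then have "L \<le> Z \<omega>" using elim by (simp add: ennreal_eq_0_iff)
    ultimately show ?case using L(1) by simp
  qed
qed

lemma openin_weak_star: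
  "f \<in> L1 M N \<Longrightarrow> open V \<Longrightarrow> openin (weak_star M N) {X \<in> Linf M N. (\<integral>\<omega>. f \<omega> * X \<omega> \<partial>M) \<in> V}"
  unfolding weak_star_def by (rule topology_generated_by_Basis) blast

lemma topspace_weak_star: "topspace (weak_star M N) = Linf M N"
proof -
  have "(\<lambda>_. 0) \<in> L1 M N" by (auto simp: L1_def)
  then have "Linf M N \<in> {{X \<in> Linf M N. (\<integral>\<omega>. f \<omega> * X \<omega> \<partial>M) \<in> U} | f U. f \<in> L1 M N \<and> open U}"
    by (intro CollectI exI[of _ "\<lambda>_. 0"] exI[of _ UNIV]) auto
  then show ?thesis unfolding weak_star_def topology_generated_by_topspace by auto
qed

lemma limitin_weak_star:
  "limitin (weak_star M N) Xs X F \<longleftrightarrow>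
     X \<in> Linf M N \<and> eventually (\<lambda>n. Xs n \<in> Linf M N) F
     \<and> (\<forall>f\<in>L1 M N. ((\<lambda>n. \<integral>\<omega>. f \<omega> * Xs n \<omega> \<partial>M) \<longlongrightarrow> (\<integral>\<omega>. f \<omega> * X \<omega> \<partial>M)) F)"
  (is "_ \<longleftrightarrow> ?X \<and> ?Xs \<and> ?tendsto")
proof
  assume lim: "limitin (weak_star M N) Xs X F"
  then have "?X" by (simp add: limitin_def topspace_weak_star)
  moreover have "?Xs"
    using lim openin_topspace[of "weak_star M N"] by (simp add: limitin_def topspace_weak_star)
  moreover have "?tendsto"
  proof (intro ballI topological_tendstoI)
    fix f V assume "f \<in> L1 M N" "open V" "(\<integral>\<omega>. f \<omega> * X \<omega> \<partial>M) \<in> V"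
    with lim \<open>?X\<close> have "eventually (\<lambda>n. Xs n \<in> {X \<in> Linf M N. (\<integral>\<omega>. f \<omega> * X \<omega> \<partial>M) \<in> V}) F"
      unfolding limitin_def by (blast intro: openin_weak_star)
    then show "eventually (\<lambda>n. (\<integral>\<omega>. f \<omega> * Xs n \<omega> \<partial>M) \<in> V) F"
      by eventually_elim simp
  qed
  ultimately show "?X \<and> ?Xs \<and> ?tendsto" by blast
next
  assume "?X \<and> ?Xs \<and> ?tendsto"
  then have X: ?X and Xs: ?Xs and tendsto: ?tendsto by auto
  have "eventually (\<lambda>n. Xs n \<in> U) F" if "openin (weak_star M N) U" "X \<in> U" for U
  proof -
    have "generate_topology_on {{X \<in> Linf M N. (\<integral>\<omega>. f \<omega> * X \<omega> \<partial>M) \<in> U} | f U. f \<in> L1 M N \<and> open U} U"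
      using that(1) unfolding weak_star_def by (rule openin_topology_generated_by)
    then show ?thesis using that(2)
    proof induction
      case (Int U V)
      then show ?case by (auto intro: eventually_conj)
    next
      case (UN K)
      then obtain U where "U \<in> K" "X \<in> U" by auto
      with UN have "eventually (\<lambda>n. Xs n \<in> U) F" by auto
      then show ?case by eventually_elim (use \<open>U \<in> K\<close> in auto)
    next
      case (Basis U)
      then obtain f V where U: "U = {X \<in> Linf M N. (\<integral>\<omega>. f \<omega> * X \<omega> \<partial>M) \<in> V}"
        and "f \<in> L1 M N" "open V"
        by auto
      with tendsto Basis.prems have "eventually (\<lambda>n. (\<integral>\<omega>. f \<omega> * Xs n \<omega> \<partial>M) \<in> V) F"
        by (auto dest: topological_tendstoD)
      with Xs show ?case unfolding U by eventually_elim simp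
    qed simp
  qed
  with X show "limitin (weak_star M N) Xs X F"
    by (simp add: limitin_def topspace_weak_star)
qed

lemma continuous_map_weak_star_if_adjoint:
  assumes Linf: "\<And>X. X \<in> Linf M B \<Longrightarrow> x X \<in> Linf M A"
    and adjoint: "\<And>f. f \<in> L1 M A \<Longrightarrow>
      \<exists>g\<in>L1 M B. \<forall>X\<in>Linf M B. (\<integral>\<omega>. f \<omega> * x X \<omega> \<partial>M) = (\<integral>\<omega>. g \<omega> * X \<omega> \<partial>M)"
  shows "continuous_map (weak_star M B) (weak_star M A) x"
  unfolding weak_star_def[of M A]
proof (rule continuous_on_generated_topo)
  fix U assume "U \<in> {{X \<in> Linf M A. (\<integral>\<omega>. f \<omega> * X \<omega> \<partial>M) \<in> U} | f U. f \<in> L1 M A \<and> open U}"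
  then obtain f V where U: "U = {X \<in> Linf M A. (\<integral>\<omega>. f \<omega> * X \<omega> \<partial>M) \<in> V}"
    and f: "f \<in> L1 M A" and V: "open V"
    by blast
  obtain g where g: "g \<in> L1 M B" "\<forall>X\<in>Linf M B. (\<integral>\<omega>. f \<omega> * x X \<omega> \<partial>M) = (\<integral>\<omega>. g \<omega> * X \<omega> \<partial>M)"
    using adjoint[OF f] by blast
  then have "x -` U \<inter> topspace (weak_star M B) = {X \<in> Linf M B. (\<integral>\<omega>. g \<omega> * X \<omega> \<partial>M) \<in> V}"
    unfolding topspace_weak_star U using Linf by auto
  then show "openin (weak_star M B) (x -` U \<inter> topspace (weak_star M B))"
    using openin_weak_star[OF g(1) V] by simp
next
  show "x ` topspace (weak_star M B) \<subseteq> \<Union> {{X \<in> Linf M A. (\<integral>\<omega>. f \<omega> * X \<omega> \<partial>M) \<in> U} | f U. f \<in> L1 M A \<and> open U}"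
    using topspace_weak_star[of M A] Linf unfolding weak_star_def topology_generated_by_topspace
    by (auto simp: topspace_weak_star)
qed

locale normal_functional = finite_measure M for M :: "'a measure" +
  fixes B :: "'a measure" and \<phi> :: "('a \<Rightarrow> real) \<Rightarrow> real"
  assumes subalgebra: "subalgebra M B"
    and linear: "X \<in> Linf M B \<Longrightarrow> Y \<in> Linf M B \<Longrightarrow> \<phi> (\<lambda>\<omega>. a * X \<omega> + b * Y \<omega>) = a * \<phi> X + b * \<phi> Y"
    and AE_cong: "X \<in> Linf M B \<Longrightarrow> Y \<in> Linf M B \<Longrightarrow> (AE \<omega> in M. X \<omega> = Y \<omega>) \<Longrightarrow> \<phi> X = \<phi> Y"
    and nonneg: "X \<in> Linf M B \<Longrightarrow> (AE \<omega> in M. 0 \<le> X \<omega>) \<Longrightarrow> 0 \<le> \<phi> X"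
    and tendsto_incseq: "(\<And>n. Xs n \<in> Linf M B) \<Longrightarrow> X \<in> Linf M B \<Longrightarrow>
      (\<And>\<omega>. \<omega> \<in> space M \<Longrightarrow> incseq (\<lambda>n. Xs n \<omega>)) \<Longrightarrow>
      (\<And>\<omega>. \<omega> \<in> space M \<Longrightarrow> (\<lambda>n. Xs n \<omega>) \<longlonglongrightarrow> X \<omega>) \<Longrightarrow> (\<lambda>n. \<phi> (Xs n)) \<longlonglongrightarrow> \<phi> X"
begin

lemma space_B: "space B = space M"
  using subalgebra by (simp add: subalgebra_def)

lemma zero: "\<phi> (\<lambda>_. 0) = 0"
  using linear[OF Linf_const Linf_const, of 0 0 0 0] by simp

lemma sum:
  "finite I \<Longrightarrow> (\<And>i. i \<in> I \<Longrightarrow> X i \<in> Linf M B) \<Longrightarrow> \<phi> (\<lambda>\<omega>. \<Sum>i\<in>I. X i \<omega>) = (\<Sum>i\<in>I. \<phi> (X i))"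
proof (induction I rule: finite_induct)
  case empty
  then show ?case using zero by simp
next
  case (insert i I)
  then show ?case
    using linear[of "X i" "\<lambda>\<omega>. \<Sum>i\<in>I. X i \<omega>" 1 1] by (simp add: Linf_sum)
qed

lemma countably_additive: "countably_additive (sets B) (\<lambda>S. ennreal (\<phi> (indicator S)))"
  unfolding countably_additive_def
proof (intro allI impI)
  fix S :: "nat \<Rightarrow> 'a set"
  assume S: "range S \<subseteq> sets B" and disj: "disjoint_family S" and U: "\<Union> (range S) \<in> sets B"
  have "(\<lambda>n. \<phi> (indicator (\<Union>i<n. S i))) \<longlonglongrightarrow> \<phi> (indicator (\<Union> (range S)))"
    using S U by (intro tendsto_incseq Linf_indicator LIMSEQ_indicator_UN)
      (auto simp: incseq_def indicator_def)
  moreover have "\<phi> (indicator (\<Union>i<n. S i)) = (\<Sum>i<n. \<phi> (indicator (S i)))" for n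
  proof -
    have "indicator (\<Union>i<n. S i) = (\<lambda>\<omega>. \<Sum>i<n. indicator (S i) \<omega> :: real)"
      using disjoint_family_on_mono[OF subset_UNIV disj] by (auto intro: indicator_UN_disjoint)
    then show ?thesis using S by (simp add: sum Linf_indicator)
  qed
  ultimately have "(\<lambda>i. \<phi> (indicator (S i))) sums \<phi> (indicator (\<Union> (range S)))"
    by (simp add: sums_def)
  then show "(\<Sum>i. ennreal (\<phi> (indicator (S i)))) = ennreal (\<phi> (indicator (\<Union> (range S))))"
    using S by (intro suminf_ennreal_eq nonneg Linf_indicator) auto
qed

definition induced_measure :: "'a measure" where
  "induced_measure = measure_of (space M) (sets B) (\<lambda>S. ennreal (\<phi> (indicator S)))"

lemma sets_induced_measure: "sets induced_measure = sets B"
  unfolding induced_measure_def using sets.sigma_algebra_axioms[of B] space_B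
  by (simp add: sigma_algebra.sets_measure_of_eq)

lemma emeasure_induced_measure:
  assumes "S \<in> sets B"
  shows "emeasure induced_measure S = \<phi> (indicator S)"
proof -
  have "indicator ({} :: 'a set) = (\<lambda>_. 0 :: real)" by auto
  then have "positive (sets B) (\<lambda>S. ennreal (\<phi> (indicator S)))"
    using zero by (simp add: positive_def)
  then show ?thesis
    unfolding induced_measure_def using assms sets.sigma_algebra_axioms[of B] space_B countably_additive
    by (intro emeasure_measure_of_sigma) auto
qed

lemma absolutely_continuous_induced_measure:
  "absolutely_continuous (restr_to_subalg M B) induced_measure"
  unfolding absolutely_continuous_def
proof
  fix S assume "S \<in> null_sets (restr_to_subalg M B)"
  then have S: "S \<in> null_sets M" "S \<in> sets B"
    using null_sets_restr_to_subalg[OF subalgebra] by auto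
  then have "\<phi> (indicator S) = \<phi> (\<lambda>_. 0)"
    using AE_not_in[OF S(1)] by (intro AE_cong Linf_indicator Linf_const) (auto elim!: eventually_mono)
  then show "S \<in> null_sets induced_measure"
    using S zero by (auto simp: emeasure_induced_measure sets_induced_measure intro: null_setsI)
qed

lemma density_indicator:
  obtains g where "g \<in> L1 M B" "\<And>S. S \<in> sets B \<Longrightarrow> \<phi> (indicator S) = (\<integral>\<omega>. g \<omega> * indicator S \<omega> \<partial>M)"
proof -
  interpret R: finite_measure "restr_to_subalg M B"
    by (rule finite_measure_restr_to_subalg[OF subalgebra finite_measure_axioms])
  obtain h where h: "h \<in> borel_measurable (restr_to_subalg M B)"
    "density (restr_to_subalg M B) h = induced_measure"
    using R.Radon_Nikodym[OF absolutely_continuous_induced_measure]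
    by (auto simp: sets_induced_measure sets_restr_to_subalg[OF subalgebra])
  have hB[measurable]: "h \<in> borel_measurable B" by (rule measurable_in_subalg'[OF subalgebra h(1)])
  have h_indicator: "(\<integral>\<^sup>+\<omega>. h \<omega> * indicator S \<omega> \<partial>M) = \<phi> (indicator S)" if S: "S \<in> sets B" for S
  proof -
    have "(\<integral>\<^sup>+\<omega>. h \<omega> * indicator S \<omega> \<partial>M) = (\<integral>\<^sup>+\<omega>. h \<omega> * indicator S \<omega> \<partial>restr_to_subalg M B)"
      using S by (intro nn_integral_subalgebra2[OF subalgebra, symmetric]) auto
    also have "\<dots> = emeasure induced_measure S"
      using S h by (subst h(2)[symmetric], subst emeasure_density)
        (auto simp: sets_restr_to_subalg[OF subalgebra])
    finally show ?thesis using S by (simp add: emeasure_induced_measure)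
  qed
  define g where "g \<omega> = enn2real (h \<omega>)" for \<omega>
  have gB: "g \<in> borel_measurable B" unfolding g_def by measurable
  have "(\<integral>\<^sup>+\<omega>. h \<omega> \<partial>M) = \<phi> (indicator (space M))"
    using h_indicator[of "space M"] space_B sets.top[of B]
    by (auto cong: nn_integral_cong simp: indicator_def)
  then have "AE \<omega> in M. h \<omega> = ennreal (g \<omega>)"
    using measurable_from_subalg[OF subalgebra hB] unfolding g_def
    by (intro nn_integral_PInf_AE[THEN eventually_mono]) (auto simp: ennreal_enn2real_if)
  then have nn_integral_g: "(\<integral>\<^sup>+\<omega>. h \<omega> * indicator S \<omega> \<partial>M) = (\<integral>\<^sup>+\<omega>. ennreal (g \<omega> * indicator S \<omega>) \<partial>M)" for S
    by (intro nn_integral_cong_AE) (auto elim!: eventually_mono simp: indicator_def)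
  have gM: "g \<in> borel_measurable M" by (rule measurable_from_subalg[OF subalgebra gB])
  have "integrable M g"
  proof (rule integrableI_nonneg)
    show "(\<integral>\<^sup>+\<omega>. ennreal (g \<omega>) \<partial>M) < \<infinity>"
      using nn_integral_g[of "space M"] h_indicator[of "space M"] space_B sets.top[of B]
      by (auto cong: nn_integral_cong simp: indicator_def)
  qed (auto simp: gM g_def)
  show ?thesis
  proof (rule that)
    show "g \<in> L1 M B" using gB \<open>integrable M g\<close> by (simp add: L1_def)
    fix S assume S: "S \<in> sets B"
    have "(\<integral>\<omega>. g \<omega> * indicator S \<omega> \<partial>M) = enn2real (\<integral>\<^sup>+\<omega>. ennreal (g \<omega> * indicator S \<omega>) \<partial>M)"
      using S by (intro integral_eq_nn_integral borel_measurable_times gM measurable_from_subalg[OF subalgebra])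
        (auto simp: g_def)
    then show "\<phi> (indicator S) = (\<integral>\<omega>. g \<omega> * indicator S \<omega> \<partial>M)"
      using S nonneg[OF Linf_indicator] by (simp add: nn_integral_g[symmetric] h_indicator)
  qed
qed

lemma density_nonneg:
  assumes g: "g \<in> L1 M B" "\<And>S. S \<in> sets B \<Longrightarrow> \<phi> (indicator S) = (\<integral>\<omega>. g \<omega> * indicator S \<omega> \<partial>M)"
    and u: "u \<in> borel_measurable B" "\<And>\<omega>. 0 \<le> u \<omega>"
  shows "u \<in> Linf M B \<Longrightarrow> \<phi> u = (\<integral>\<omega>. g \<omega> * u \<omega> \<partial>M)"
  using u
proof (induction rule: borel_measurable_induct_real)
  case (set S)
  then show ?case by (simp add: g(2))
next
  case (mult u c)
  show ?case
  proof (cases "c = 0")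
    case True
    then show ?thesis using zero by simp
  next
    case False
    have "(\<lambda>\<omega>. (1 / c) * (c * u \<omega>) + 0 * (c * u \<omega>)) \<in> Linf M B"
      by (rule Linf_linear[OF mult.prems mult.prems])
    then have "u \<in> Linf M B" using False by simp
    then show ?thesis
      using mult linear[of u u c 0] by (simp add: mult.left_commute[of _ c])
  qed
next
  case (add u v)
  have "u \<in> Linf M B" "v \<in> Linf M B"
    using add by (auto intro: Linf_AE_abs_le[OF _ add.prems] AE_I2 simp del: ennreal_plus)
  moreover have "integrable M (\<lambda>\<omega>. g \<omega> * w \<omega>)" if "w \<in> Linf M B" for w
    using g(1) that subalgebra by (intro integrable_mult_Linf) (auto simp: L1_def)
  ultimately show ?case
    using add linear[of v u 1 1] by (simp add: distrib_left)
next
  case (seq U)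
  have lim_U: "(\<lambda>i. U i \<omega>) \<longlonglongrightarrow> u \<omega>" if "\<omega> \<in> space M" for \<omega>
    using seq(4)[of \<omega>] space_B that by simp
  have le_u: "\<bar>U i \<omega>\<bar> \<le> \<bar>u \<omega>\<bar>" if "\<omega> \<in> space M" for i \<omega>
  proof -
    have "U i \<omega> \<le> u \<omega>"
      using seq(3) by (intro incseq_le[OF _ lim_U[OF that]]) (simp add: incseq_def le_fun_def)
    then show ?thesis using seq(2)[of i \<omega>] by simp
  qed
  then have U: "U i \<in> Linf M B" for i
    using seq by (intro Linf_AE_abs_le[OF _ seq.prems] AE_I2) auto
  obtain C where "AE \<omega> in M. \<bar>u \<omega>\<bar> \<le> C" using seq.prems by (auto simp: Linf_def)
  with AE_space have bound: "AE \<omega> in M. \<forall>i. \<bar>U i \<omega>\<bar> \<le> C"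
    by eventually_elim (auto intro: order_trans[OF le_u])
  have lim_\<phi>: "(\<lambda>i. \<phi> (U i)) \<longlonglongrightarrow> \<phi> u"
    using seq(3) by (intro tendsto_incseq[OF U seq.prems _ lim_U]) (auto simp: incseq_def le_fun_def)
  have "(\<lambda>i. \<integral>\<omega>. g \<omega> * U i \<omega> \<partial>M) \<longlonglongrightarrow> (\<integral>\<omega>. g \<omega> * u \<omega> \<partial>M)"
  proof (rule tendsto_integral_mult_bounded[OF _ _ _ bound])
    show "integrable M g" using g(1) by (simp add: L1_def)
    show "U i \<in> borel_measurable M" for i by (rule Linf_measurable_subalgebra[OF subalgebra U])
    show "u \<in> borel_measurable M" by (rule Linf_measurable_subalgebra[OF subalgebra seq.prems])
    show "AE \<omega> in M. (\<lambda>i. U i \<omega>) \<longlonglongrightarrow> u \<omega>" using lim_U by (rule AE_I2)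
  qed
  then have "(\<lambda>i. \<phi> (U i)) \<longlonglongrightarrow> (\<integral>\<omega>. g \<omega> * u \<omega> \<partial>M)"
    by (simp add: seq.IH[OF U])
  with lim_\<phi> show ?case by (rule LIMSEQ_unique)
qed

lemma density: "\<exists>g\<in>L1 M B. \<forall>X\<in>Linf M B. \<phi> X = (\<integral>\<omega>. g \<omega> * X \<omega> \<partial>M)"
proof -
  obtain g where g: "g \<in> L1 M B" "\<And>S. S \<in> sets B \<Longrightarrow> \<phi> (indicator S) = (\<integral>\<omega>. g \<omega> * indicator S \<omega> \<partial>M)"
    using density_indicator by blast
  have "\<phi> X = (\<integral>\<omega>. g \<omega> * X \<omega> \<partial>M)" if X: "X \<in> Linf M B" for X
  proof -
    define Xp where "Xp \<omega> = max (X \<omega>) 0" for \<omega>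
    define Xn where "Xn \<omega> = max (- X \<omega>) 0" for \<omega>
    have meas: "Xp \<in> borel_measurable B" "Xn \<in> borel_measurable B"
      using Linf_measurable[OF X] unfolding Xp_def Xn_def by auto
    have Linf: "Xp \<in> Linf M B" "Xn \<in> Linf M B"
      using meas by (auto intro!: Linf_AE_abs_le[OF _ X] AE_I2 simp: Xp_def Xn_def)
    have nonneg: "0 \<le> Xp \<omega>" "0 \<le> Xn \<omega>" for \<omega>
      by (simp_all add: Xp_def Xn_def)
    have integrable: "integrable M (\<lambda>\<omega>. g \<omega> * Y \<omega>)" if "Y \<in> Linf M B" for Y
      using g(1) subalgebra that by (intro integrable_mult_Linf) (auto simp: L1_def)
    have X_eq: "X = (\<lambda>\<omega>. 1 * Xp \<omega> + (-1) * Xn \<omega>)"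
      by (auto simp: Xp_def Xn_def max_def)
    have "\<phi> X = \<phi> Xp - \<phi> Xn"
      using linear[OF Linf, of 1 "-1"] by (subst X_eq) simp
    also have "\<dots> = (\<integral>\<omega>. g \<omega> * Xp \<omega> \<partial>M) - (\<integral>\<omega>. g \<omega> * Xn \<omega> \<partial>M)"
      using density_nonneg[OF g meas(1) nonneg(1) Linf(1)] density_nonneg[OF g meas(2) nonneg(2) Linf(2)]
      by simp
    also have "\<dots> = (\<integral>\<omega>. g \<omega> * X \<omega> \<partial>M)"
      using integrable[OF Linf(1)] integrable[OF Linf(2)]
      by (subst X_eq) (simp add: right_diff_distrib)
    finally show ?thesis .
  qed
  with g(1) show ?thesis by blast
qed

end

locale positive_operator = finite_measure M for M :: "'a measure" +
  fixes A B :: "'a measure" and x :: "('a \<Rightarrow> real) \<Rightarrow> 'a \<Rightarrow> real"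
  assumes subalgebra_A: "subalgebra M A" and subalgebra_B: "subalgebra M B"
    and Linf_image: "X \<in> Linf M B \<Longrightarrow> x X \<in> Linf M A"
    and AE_cong: "X \<in> Linf M B \<Longrightarrow> Y \<in> Linf M B \<Longrightarrow> (AE \<omega> in M. X \<omega> = Y \<omega>) \<Longrightarrow>
      AE \<omega> in M. x X \<omega> = x Y \<omega>"
    and AE_linear: "X \<in> Linf M B \<Longrightarrow> Y \<in> Linf M B \<Longrightarrow>
      AE \<omega> in M. x (\<lambda>\<omega>. a * X \<omega> + b * Y \<omega>) \<omega> = a * x X \<omega> + b * x Y \<omega>"
    and AE_mono: "X \<in> Linf M B \<Longrightarrow> Y \<in> Linf M B \<Longrightarrow> (AE \<omega> in M. X \<omega> \<le> Y \<omega>) \<Longrightarrow>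
      AE \<omega> in M. x X \<omega> \<le> x Y \<omega>"
begin

lemma borel_measurable_image: "X \<in> Linf M B \<Longrightarrow> x X \<in> borel_measurable M"
  using Linf_image Linf_measurable_subalgebra subalgebra_A by blast

lemma AE_uminus: "X \<in> Linf M B \<Longrightarrow> AE \<omega> in M. x (\<lambda>\<omega>. - X \<omega>) \<omega> = - x X \<omega>"
  using AE_linear[of X X "-1" 0] by simp

lemma AE_zero: "AE \<omega> in M. x (\<lambda>_. 0) \<omega> = 0"
  using AE_linear[OF Linf_const Linf_const, of 0 0 0 0] by simp

lemma AE_nonneg:
  assumes "X \<in> Linf M B" "AE \<omega> in M. 0 \<le> X \<omega>"
  shows "AE \<omega> in M. 0 \<le> x X \<omega>"
proof -
  have "AE \<omega> in M. x (\<lambda>_. 0) \<omega> \<le> x X \<omega>"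
    using assms by (intro AE_mono Linf_const) auto
  with AE_zero show ?thesis by eventually_elim simp
qed

lemma cont_from_below_if_above:
  assumes above: "cont_from_above M B x"
  shows "cont_from_below M B x"
  unfolding cont_from_below_def
proof (intro allI impI, elim conjE)
  fix Xs X assume Xs: "\<forall>n. Xs n \<in> Linf M B" and X: "X \<in> Linf M B"
    and inc: "AE \<omega> in M. incseq (\<lambda>n. Xs n \<omega>)" and lim: "AE \<omega> in M. (\<lambda>n. Xs n \<omega>) \<longlonglongrightarrow> X \<omega>"
  have "AE \<omega> in M. decseq (\<lambda>n. - Xs n \<omega>)"
    using inc by eventually_elim (simp add: decseq_def incseq_def)
  moreover have "AE \<omega> in M. (\<lambda>n. - Xs n \<omega>) \<longlonglongrightarrow> - X \<omega>"
    using lim by eventually_elim (rule tendsto_minus)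
  moreover have neg: "(\<lambda>\<omega>. - Y \<omega>) \<in> Linf M B" if "Y \<in> Linf M B" for Y
    using Linf_linear[OF that that, of "-1" 0] by simp
  ultimately have "AE \<omega> in M. decseq (\<lambda>n. x (\<lambda>\<omega>. - Xs n \<omega>) \<omega>)
      \<and> (\<lambda>n. x (\<lambda>\<omega>. - Xs n \<omega>) \<omega>) \<longlonglongrightarrow> x (\<lambda>\<omega>. - X \<omega>) \<omega>"
    using above[unfolded cont_from_above_def, rule_format, of "\<lambda>n \<omega>. - Xs n \<omega>" "\<lambda>\<omega>. - X \<omega>"]
      neg[OF X] neg[OF Xs[rule_format]] by blast
  moreover have "AE \<omega> in M. \<forall>n. x (\<lambda>\<omega>. - Xs n \<omega>) \<omega> = - x (Xs n) \<omega>"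
    using Xs AE_uminus by (simp add: AE_all_countable)
  moreover have "AE \<omega> in M. x (\<lambda>\<omega>. - X \<omega>) \<omega> = - x X \<omega>"
    using X by (rule AE_uminus)
  ultimately show "AE \<omega> in M. incseq (\<lambda>n. x (Xs n) \<omega>) \<and> (\<lambda>n. x (Xs n) \<omega>) \<longlonglongrightarrow> x X \<omega>"
  proof eventually_elim
    case (elim \<omega>)
    then have "decseq (\<lambda>n. - x (Xs n) \<omega>)" "(\<lambda>n. - x (Xs n) \<omega>) \<longlonglongrightarrow> - x X \<omega>"
      by simp_all
    then show ?case
      by (simp add: decseq_def incseq_def tendsto_minus_cancel_left)
  qed
qed

lemma cont_from_above_if_weak_star_continuous:
  assumes cont: "continuous_map (weak_star M B) (weak_star M A) x"
  shows "cont_from_above M B x"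
  unfolding cont_from_above_def
proof (intro allI impI, elim conjE)
  fix Xs X assume Xs: "\<forall>n. Xs n \<in> Linf M B" and X: "X \<in> Linf M B"
    and dec: "AE \<omega> in M. decseq (\<lambda>n. Xs n \<omega>)" and lim: "AE \<omega> in M. (\<lambda>n. Xs n \<omega>) \<longlonglongrightarrow> X \<omega>"
  have between: "AE \<omega> in M. \<forall>n. X \<omega> \<le> Xs n \<omega> \<and> Xs n \<omega> \<le> Xs 0 \<omega>"
    using dec lim by eventually_elim (auto intro: decseq_ge simp: decseq_def)
  then obtain C where bound: "AE \<omega> in M. \<forall>n. \<bar>Xs n \<omega>\<bar> \<le> C"
    using Linf_uniform_bound_between[OF X] Xs by blast
  have "(\<lambda>n. \<integral>\<omega>. f \<omega> * Xs n \<omega> \<partial>M) \<longlonglongrightarrow> (\<integral>\<omega>. f \<omega> * X \<omega> \<partial>M)" if "f \<in> L1 M B" for f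
    using that Xs by (intro tendsto_integral_mult_bounded[OF _ _ _ bound lim]
      Linf_measurable_subalgebra[OF subalgebra_B X] Linf_measurable_subalgebra[OF subalgebra_B])
      (auto simp: L1_def)
  then have "limitin (weak_star M B) Xs X sequentially"
    unfolding limitin_weak_star using X Xs by simp
  then have "limitin (weak_star M A) (x \<circ> Xs) (x X) sequentially"
    by (rule continuous_map_limit[OF cont])
  moreover have "(\<lambda>_. 1) \<in> L1 M A"
    by (simp add: L1_def)
  ultimately have "(\<lambda>n. \<integral>\<omega>. x (Xs n) \<omega> \<partial>M) \<longlonglongrightarrow> (\<integral>\<omega>. x X \<omega> \<partial>M)"
    unfolding limitin_weak_star by fastforce
  moreover have "AE \<omega> in M. x (Xs (Suc n)) \<omega> \<le> x (Xs n) \<omega>" for n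
    using dec Xs by (intro AE_mono) (auto simp: decseq_Suc_iff elim!: eventually_mono)
  then have "AE \<omega> in M. \<forall>n. x (Xs (Suc n)) \<omega> \<le> x (Xs n) \<omega>"
    by (simp add: AE_all_countable)
  then have "AE \<omega> in M. decseq (\<lambda>n. x (Xs n) \<omega>)"
    by eventually_elim (simp add: decseq_Suc_iff)
  moreover have "AE \<omega> in M. x X \<omega> \<le> x (Xs n) \<omega>" for n
    using between X Xs by (intro AE_mono) (auto elim!: eventually_mono)
  then have "AE \<omega> in M. \<forall>n. x X \<omega> \<le> x (Xs n) \<omega>"
    by (simp add: AE_all_countable)
  moreover have "integrable M (x Y)" if "Y \<in> Linf M B" for Y
    by (rule integrable_Linf[OF finite_measure_axioms subalgebra_A Linf_image[OF that]])
  ultimately have "AE \<omega> in M. (\<lambda>n. x (Xs n) \<omega>) \<longlonglongrightarrow> x X \<omega>"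
    using X Xs by (intro AE_tendsto_if_decseq_integral_tendsto) auto
  with \<open>AE \<omega> in M. decseq (\<lambda>n. x (Xs n) \<omega>)\<close>
  show "AE \<omega> in M. decseq (\<lambda>n. x (Xs n) \<omega>) \<and> (\<lambda>n. x (Xs n) \<omega>) \<longlonglongrightarrow> x X \<omega>"
    by eventually_elim simp
qed

lemma integrable_mult_image: "integrable M f \<Longrightarrow> X \<in> Linf M B \<Longrightarrow> integrable M (\<lambda>\<omega>. f \<omega> * x X \<omega>)"
  by (rule integrable_mult_Linf[OF _ subalgebra_A Linf_image])

lemma normal_functional_integral_mult:
  assumes below: "cont_from_below M B x" and f: "f \<in> L1 M A" "\<And>\<omega>. 0 \<le> f \<omega>"
  shows "normal_functional M B (\<lambda>X. \<integral>\<omega>. f \<omega> * x X \<omega> \<partial>M)"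
proof (intro normal_functional.intro finite_measure_axioms normal_functional_axioms.intro)
  have f_int: "integrable M f" and fM: "f \<in> borel_measurable M"
    using f(1) by (auto simp: L1_def)
  have meas: "(\<lambda>\<omega>. f \<omega> * x X \<omega>) \<in> borel_measurable M" if "X \<in> Linf M B" for X
    using fM borel_measurable_image[OF that] by measurable
  show "subalgebra M B" by (rule subalgebra_B)
  show "(\<integral>\<omega>. f \<omega> * x (\<lambda>\<omega>. a * X \<omega> + b * Y \<omega>) \<omega> \<partial>M)
      = a * (\<integral>\<omega>. f \<omega> * x X \<omega> \<partial>M) + b * (\<integral>\<omega>. f \<omega> * x Y \<omega> \<partial>M)"
    if X: "X \<in> Linf M B" and Y: "Y \<in> Linf M B" for X Y a b
  proof -
    have "(\<integral>\<omega>. f \<omega> * x (\<lambda>\<omega>. a * X \<omega> + b * Y \<omega>) \<omega> \<partial>M)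
        = (\<integral>\<omega>. a * (f \<omega> * x X \<omega>) + b * (f \<omega> * x Y \<omega>) \<partial>M)"
      using meas[OF Linf_linear[OF X Y]] meas[OF X] meas[OF Y] AE_linear[OF X Y, of a b]
      by (intro integral_cong_AE) (auto elim!: eventually_mono simp: algebra_simps)
    then show ?thesis
      using integrable_mult_image[OF f_int X] integrable_mult_image[OF f_int Y] by simp
  qed
  show "(\<integral>\<omega>. f \<omega> * x X \<omega> \<partial>M) = (\<integral>\<omega>. f \<omega> * x Y \<omega> \<partial>M)"
    if "X \<in> Linf M B" "Y \<in> Linf M B" "AE \<omega> in M. X \<omega> = Y \<omega>" for X Y
    using meas[OF that(1)] meas[OF that(2)] AE_cong[OF that] by (intro integral_cong_AE) (auto elim!: eventually_mono)
  show "0 \<le> (\<integral>\<omega>. f \<omega> * x X \<omega> \<partial>M)" if "X \<in> Linf M B" "AE \<omega> in M. 0 \<le> X \<omega>" for X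
    using AE_nonneg[OF that] f(2) by (intro integral_nonneg_AE) (auto elim!: eventually_mono)
  show "(\<lambda>n. \<integral>\<omega>. f \<omega> * x (Xs n) \<omega> \<partial>M) \<longlonglongrightarrow> (\<integral>\<omega>. f \<omega> * x X \<omega> \<partial>M)"
    if Xs: "\<And>n. Xs n \<in> Linf M B" and X: "X \<in> Linf M B"
      and inc: "\<And>\<omega>. \<omega> \<in> space M \<Longrightarrow> incseq (\<lambda>n. Xs n \<omega>)"
      and lim: "\<And>\<omega>. \<omega> \<in> space M \<Longrightarrow> (\<lambda>n. Xs n \<omega>) \<longlonglongrightarrow> X \<omega>"
    for Xs X
  proof -
    have x_lim: "AE \<omega> in M. incseq (\<lambda>n. x (Xs n) \<omega>) \<and> (\<lambda>n. x (Xs n) \<omega>) \<longlonglongrightarrow> x X \<omega>"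
      using below[unfolded cont_from_below_def, rule_format, of Xs X] Xs X inc lim
      by (auto intro: AE_I2)
    have "AE \<omega> in M. x (Xs n) \<omega> \<le> x X \<omega>" for n
      using inc lim by (intro AE_mono Xs X AE_I2 incseq_le)
    then have "AE \<omega> in M. \<forall>n. x (Xs 0) \<omega> \<le> x (Xs n) \<omega> \<and> x (Xs n) \<omega> \<le> x X \<omega>"
      using x_lim by (auto simp: AE_all_countable incseq_def elim!: eventually_mono)
    then obtain C where "AE \<omega> in M. \<forall>n. \<bar>x (Xs n) \<omega>\<bar> \<le> C"
      using Linf_uniform_bound_between[OF Linf_image[OF Xs[of 0]] Linf_image[OF X], where Xs="\<lambda>n. x (Xs n)"]
      by blast
    then show ?thesis
      using x_lim f_int by (intro tendsto_integral_mult_bounded borel_measurable_image Xs X) auto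
  qed
qed

lemma adjoint_if_cont_from_below:
  assumes below: "cont_from_below M B x" and f: "f \<in> L1 M A"
  shows "\<exists>g\<in>L1 M B. \<forall>X\<in>Linf M B. (\<integral>\<omega>. f \<omega> * x X \<omega> \<partial>M) = (\<integral>\<omega>. g \<omega> * X \<omega> \<partial>M)"
proof -
  define fp where "fp = (\<lambda>\<omega>. max (f \<omega>) 0)"
  define fn where "fn = (\<lambda>\<omega>. max (- f \<omega>) 0)"
  have L1: "fp \<in> L1 M A" "fn \<in> L1 M A"
    using f by (auto simp: L1_def fp_def fn_def intro!: integrable_max)
  have nonneg: "0 \<le> fp \<omega>" "0 \<le> fn \<omega>" for \<omega>
    by (simp_all add: fp_def fn_def)
  from normal_functional.density[OF normal_functional_integral_mult[OF below L1(1) nonneg(1)]]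
  obtain gp where gp: "gp \<in> L1 M B" "\<forall>X\<in>Linf M B. (\<integral>\<omega>. fp \<omega> * x X \<omega> \<partial>M) = (\<integral>\<omega>. gp \<omega> * X \<omega> \<partial>M)" ..
  from normal_functional.density[OF normal_functional_integral_mult[OF below L1(2) nonneg(2)]]
  obtain gn where gn: "gn \<in> L1 M B" "\<forall>X\<in>Linf M B. (\<integral>\<omega>. fn \<omega> * x X \<omega> \<partial>M) = (\<integral>\<omega>. gn \<omega> * X \<omega> \<partial>M)" ..
  have "(\<integral>\<omega>. f \<omega> * x X \<omega> \<partial>M) = (\<integral>\<omega>. (gp \<omega> - gn \<omega>) * X \<omega> \<partial>M)" if X: "X \<in> Linf M B" for X
  proof -
    have f_eq: "f = (\<lambda>\<omega>. fp \<omega> - fn \<omega>)"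
      by (auto simp: fp_def fn_def max_def)
    have "(\<integral>\<omega>. f \<omega> * x X \<omega> \<partial>M) = (\<integral>\<omega>. fp \<omega> * x X \<omega> \<partial>M) - (\<integral>\<omega>. fn \<omega> * x X \<omega> \<partial>M)"
      using integrable_mult_image[OF _ X, of fp] integrable_mult_image[OF _ X, of fn] L1
      by (subst f_eq) (simp add: left_diff_distrib L1_def)
    also have "\<dots> = (\<integral>\<omega>. gp \<omega> * X \<omega> \<partial>M) - (\<integral>\<omega>. gn \<omega> * X \<omega> \<partial>M)"
      using gp(2) gn(2) X by simp
    also have "\<dots> = (\<integral>\<omega>. (gp \<omega> - gn \<omega>) * X \<omega> \<partial>M)"
      using integrable_mult_Linf[OF _ subalgebra_B X, of gp] integrable_mult_Linf[OF _ subalgebra_B X, of gn]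
        gp(1) gn(1)
      by (simp add: left_diff_distrib L1_def)
    finally show ?thesis .
  qed
  moreover have "(\<lambda>\<omega>. gp \<omega> - gn \<omega>) \<in> L1 M B"
    using gp(1) gn(1) by (auto simp: L1_def)
  ultimately show ?thesis by (intro bexI[of _ "\<lambda>\<omega>. gp \<omega> - gn \<omega>"] ballI)
qed

end

theorem proposition3p14:
  fixes M A B :: "'a measure" and x :: "('a \<Rightarrow> real) \<Rightarrow> ('a \<Rightarrow> real)"
  assumes "prob_space M" and "complete_measure M"
    and "subalgebra M A" and "subalgebra M B" and "sets A \<subseteq> sets B"
    and "admissible_op M A B x"
  shows "(cont_from_below M B x \<longleftrightarrow> cont_from_above M B x)
       \<and> (cont_from_above M B x \<longleftrightarrow> continuous_map (weak_star M B) (weak_star M A) x)"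
proof -
  have "finite_measure M"
    using \<open>prob_space M\<close> by (simp add: prob_space_def)
  then interpret positive_operator M A B x
    using assms by (intro positive_operator.intro positive_operator_axioms.intro) (simp_all add: admissible_op_def)
  have "continuous_map (weak_star M B) (weak_star M A) x" if "cont_from_below M B x"
    using Linf_image adjoint_if_cont_from_below[OF that] by (rule continuous_map_weak_star_if_adjoint)
  then show ?thesis
    using cont_from_below_if_above cont_from_above_if_weak_star_continuous by blast
qed

end
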